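(* If the anti-rotor $\mathfrak{u}_A$ of an algebra $A$ is one-dimensional and contains a nonsingular matrix, then $A$ is simple.
   Context: An "algebra" is a real finite-dimensional unital associative algebra with underlying vector space $\mathbb{R}^n$, standard basis, elements column vectors $s=(x_1,\dots,x_n)^T$, $\mathbf{d}s=(dx_1,\dots,dx_n)^T$. An uncurling metric of $A$ is a real symmetric $n\times n$ matrix $L$ with $d\big((s^{-1})^TL\,\mathbf{d}s\big)=0$ on an open ball centered at $\mathbf{1}_A$ consisting only of units; the anti-rotor $\mathfrak{u}_A$ is the real vector space of all uncurling metrics of $A$. *)

theory Defs
  imports "HOL-Analysis.Analysis"
begin

text \<open>An algebra on R^n (n = CARD('n)): a bilinear, associative multiplication
  with two-sided unit e.  Bilinearity in the standard basis is the same as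
  being given by structure constants.\<close>
definition is_algebra :: "(real^'n \<Rightarrow> real^'n \<Rightarrow> real^'n) \<Rightarrow> real^'n \<Rightarrow> bool" where
  "is_algebra mul e \<longleftrightarrow> bilinear mul
     \<and> (\<forall>x y z. mul (mul x y) z = mul x (mul y z))
     \<and> (\<forall>x. mul e x = x \<and> mul x e = x)"

definition alg_unit :: "(real^'n \<Rightarrow> real^'n \<Rightarrow> real^'n) \<Rightarrow> real^'n \<Rightarrow> real^'n \<Rightarrow> bool" where
  "alg_unit mul e s \<longleftrightarrow> (\<exists>t. mul s t = e \<and> mul t s = e)"

definition alg_inv :: "(real^'n \<Rightarrow> real^'n \<Rightarrow> real^'n) \<Rightarrow> real^'n \<Rightarrow> real^'n \<Rightarrow> real^'n" where
  "alg_inv mul e s = (THE t. mul s t = e \<and> mul t s = e)"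

text \<open>A 1-form \<omega> = \<Sum>_j w_j(s) dx_j, given by its coefficient vector field w,
  is closed (d\<omega> = 0) at s: w is differentiable at s and its Jacobian is
  symmetric, i.e. \<partial>w_j/\<partial>x_i = \<partial>w_i/\<partial>x_j.\<close>
definition closed_form_at :: "(real^'n \<Rightarrow> real^'n) \<Rightarrow> real^'n \<Rightarrow> bool" where
  "closed_form_at w s \<longleftrightarrow> (\<exists>D. (w has_derivative D) (at s) \<and> (\<forall>u v. D u \<bullet> v = D v \<bullet> u))"

text \<open>(s^{-1})^T L ds has coefficient (row) vector (s^{-1})^T L, i.e. the vector
  alg_inv s v* L.\<close>
definition uncurling_metric ::
  "(real^'n \<Rightarrow> real^'n \<Rightarrow> real^'n) \<Rightarrow> real^'n \<Rightarrow> real^'n^'n \<Rightarrow> bool" where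
  "uncurling_metric mul e L \<longleftrightarrow> transpose L = L \<and>
     (\<exists>r>0. (\<forall>s\<in>ball e r. alg_unit mul e s) \<and>
            (\<forall>s\<in>ball e r. closed_form_at (\<lambda>x. alg_inv mul e x v* L) s))"

definition anti_rotor :: "(real^'n \<Rightarrow> real^'n \<Rightarrow> real^'n) \<Rightarrow> real^'n \<Rightarrow> (real^'n^'n) set" where
  "anti_rotor mul e = {L. uncurling_metric mul e L}"

definition two_sided_ideal :: "(real^'n \<Rightarrow> real^'n \<Rightarrow> real^'n) \<Rightarrow> (real^'n) set \<Rightarrow> bool" where
  "two_sided_ideal mul I \<longleftrightarrow> subspace I \<and> (\<forall>a\<in>UNIV. \<forall>x\<in>I. mul a x \<in> I \<and> mul x a \<in> I)"

definition simple_algebra :: "(real^'n \<Rightarrow> real^'n \<Rightarrow> real^'n) \<Rightarrow> real^'n \<Rightarrow> bool" where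
  "simple_algebra mul e \<longleftrightarrow> e \<noteq> 0 \<and>
     (\<forall>I. two_sided_ideal mul I \<longrightarrow> I = {0} \<or> I = UNIV)"

end

theory Submission
  imports Defs
begin

text \<open>Suppose I is a nonzero proper two-sided ideal. The trace of the action of A on A/I
  (realised through the orthogonal projection Q onto the orthogonal complement of I) is a
  linear functional \<tau> with \<tau>(ab) = \<tau>(ba), vanishing on I, with \<tau>(1) = dim (A/I) > 0.
  The matrix M of the symmetric bilinear form (a, b) \<mapsto> \<tau>(ab) is an uncurling metric:
  as d(s^-1) = -s^-1 ds s^-1, the derivative of s \<mapsto> (s^-1)^T M is the form
  (u, v) \<mapsto> -\<tau>(s^-1 u s^-1 v), which is symmetric because \<tau> is a trace. Now M is nonzero
  but kills I, so it is singular and cannot be a multiple of a nonsingular element of u_A,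
  contradicting dim u_A = 1.\<close>

lemma is_algebraD:
  assumes "is_algebra mul e"
  shows "bilinear mul" "linear (mul a)" "linear (\<lambda>x. mul x b)"
    "mul (mul x y) z = mul x (mul y z)" "mul e x = x" "mul x e = x"
  using assms unfolding is_algebra_def bilinear_def by auto

lemma is_algebra_one_neq_zero:
  fixes mul :: "real^'n \<Rightarrow> real^'n \<Rightarrow> real^'n"
  assumes "is_algebra mul e"
  shows "e \<noteq> 0"
proof
  assume "e = 0"
  then have "x = 0" for x :: "real^'n"
    using is_algebraD(5)[OF assms, of x] linear_0[OF is_algebraD(3)[OF assms, of x]] by simp
  then show False
    using zero_neq_one[where 'a="real^'n"] by blast
qed

lemma mul_alg_inv:
  assumes "is_algebra mul e" "alg_unit mul e s"
  shows "mul s (alg_inv mul e s) = e" "mul (alg_inv mul e s) s = e"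
proof -
  obtain t where t: "mul s t = e" "mul t s = e"
    using assms(2) unfolding alg_unit_def by blast
  have "alg_inv mul e s = t"
    unfolding alg_inv_def
  proof (rule the_equality)
    fix t' assume "mul s t' = e \<and> mul t' s = e"
    then show "t' = t"
      using t is_algebraD(4-6)[OF assms(1)] by metis
  qed (use t in simp)
  with t show "mul s (alg_inv mul e s) = e" "mul (alg_inv mul e s) s = e"
    by auto
qed

lemma orthogonal_projection_complement_exists:
  fixes I :: "'a::euclidean_space set"
  assumes "subspace I"
  obtains Q where "linear Q" "\<And>x. x \<in> I \<Longrightarrow> Q x = 0" "\<And>x. x - Q x \<in> I"
    "\<And>x y. Q x \<bullet> y = x \<bullet> Q y"
proof -
  obtain B where B: "B \<subseteq> I" "pairwise orthogonal B" "span B = I"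
    using orthogonal_basis_subspace[OF assms] by metis
  define P where "P x = (\<Sum>b\<in>B. (b \<bullet> x / (b \<bullet> b)) *\<^sub>R b)" for x
  define Q where "Q x = x - P x" for x
  have "linear P"
    unfolding P_def
    by (intro real_vector.linear_compose_sum ballI bounded_linear.linear
        bounded_linear_scaleR_const
        bounded_linear_compose[OF bounded_linear_divide bounded_linear_inner_right])
  then have "linear Q"
    unfolding Q_def using real_vector.linear_compose_sub[OF linear_id] by (simp add: id_def)
  have P_in: "P x \<in> I" for x
    unfolding P_def using B(1) assms by (auto intro!: subspace_sum subspace_scale)
  have Q_orth: "Q x \<bullet> y = 0" if "y \<in> I" for x y
    using Gram_Schmidt_step[OF B(2), of y x] that B(3)
    by (simp add: Q_def P_def orthogonal_def inner_commute)
  have "Q x = 0" if "x \<in> I" for x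
  proof -
    have "Q x \<in> I"
      using that P_in assms by (simp add: Q_def subspace_diff)
    then show ?thesis
      using Q_orth by (metis inner_eq_zero_iff)
  qed
  moreover have "Q x \<bullet> y = Q x \<bullet> Q y" for x y
    using Q_orth[OF P_in[of y]] by (simp add: Q_def[of y] inner_diff_right)
  then have "Q x \<bullet> y = x \<bullet> Q y" for x y
    by (metis inner_commute)
  ultimately show ?thesis
    using that \<open>linear Q\<close> P_in by (simp add: Q_def)
qed

lemma trace_matrix_orthogonal_projection_pos:
  fixes Q :: "real^'n \<Rightarrow> real^'n"
  assumes "linear Q" "\<And>x. Q (Q x) = Q x" "\<And>x y. Q x \<bullet> y = x \<bullet> Q y" "Q y \<noteq> 0"
  shows "trace (matrix Q) > 0"
proof -
  have diag: "matrix Q $ i $ i = Q (axis i 1) \<bullet> Q (axis i 1)" for i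
  proof -
    have "matrix Q $ i $ i = Q (Q (axis i 1)) \<bullet> axis i 1"
      by (simp add: matrix_def inner_axis assms(2))
    then show ?thesis
      using assms(3) by simp
  qed
  obtain i where "Q (axis i 1) \<noteq> 0"
  proof (rule ccontr)
    assume "\<not> thesis"
    with that have "Q = (\<lambda>_. 0)"
      by (intro linear_eq_stdbasis[OF assms(1)]) (auto simp: Basis_vec_def linear_zero)
    with assms(4) show False
      by simp
  qed
  then show ?thesis
    unfolding trace_def diag by (intro sum_pos2[of UNIV i]) auto
qed

lemma ideal_trace_functional_exists:
  fixes mul :: "real^'n \<Rightarrow> real^'n \<Rightarrow> real^'n"
  assumes alg: "is_algebra mul e" and I: "two_sided_ideal mul I" "I \<noteq> UNIV"
  obtains tf :: "real^'n \<Rightarrow> real" where "linear tf" "\<And>a b. tf (mul a b) = tf (mul b a)"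
    "\<And>x. x \<in> I \<Longrightarrow> tf x = 0" "tf e \<noteq> 0"
proof -
  have "subspace I" and ideal: "\<And>a x. x \<in> I \<Longrightarrow> mul a x \<in> I \<and> mul x a \<in> I"
    using I(1) unfolding two_sided_ideal_def by auto
  obtain Q where Q: "linear Q" "\<And>x. x \<in> I \<Longrightarrow> Q x = 0" "\<And>x. x - Q x \<in> I"
    "\<And>x y. Q x \<bullet> y = x \<bullet> Q y"
    using orthogonal_projection_complement_exists[OF \<open>subspace I\<close>] by blast
  have Q_absorb: "Q (mul a z) = Q (mul a (Q z))" for a z
  proof -
    have "Q (mul a z) - Q (mul a (Q z)) = Q (mul a (z - Q z))"
      using linear_diff[OF Q(1)] linear_diff[OF is_algebraD(2)[OF alg]] by simp
    also have "\<dots> = 0"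
      using Q(2,3) ideal by blast
    finally show ?thesis
      by simp
  qed
  define tf where "tf x = trace (matrix (Q \<circ> mul x))" for x
  have tf_sum: "tf x = (\<Sum>i\<in>UNIV. Q (mul x (axis i 1)) $ i)" for x
    unfolding tf_def trace_def matrix_def by simp
  have "linear tf"
  proof (rule linearI)
    fix x y :: "real^'n" and c :: real
    show "tf (x + y) = tf x + tf y"
      unfolding tf_sum linear_add[OF is_algebraD(3)[OF alg]]
      by (simp add: linear_add[OF Q(1)] sum.distrib)
    show "tf (c *\<^sub>R x) = c *\<^sub>R tf x"
      unfolding tf_sum linear_scale[OF is_algebraD(3)[OF alg]]
      by (simp add: linear_scale[OF Q(1)] sum_distrib_left)
  qed
  moreover have "tf (mul a b) = tf (mul b a)" for a b
  proof -
    have lin: "linear (Q \<circ> mul c)" for c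
      using linear_compose[OF is_algebraD(2)[OF alg] Q(1)] .
    have "Q \<circ> mul (mul c d) = (Q \<circ> mul c) \<circ> (Q \<circ> mul d)" for c d
      using Q_absorb is_algebraD(4)[OF alg] by (auto simp: fun_eq_iff)
    then have "tf (mul c d) = trace (matrix (Q \<circ> mul c) ** matrix (Q \<circ> mul d))" for c d
      unfolding tf_def using matrix_compose[OF lin lin] by simp
    then show ?thesis
      using trace_mul_sym by metis
  qed
  moreover have "tf x = 0" if "x \<in> I" for x
    unfolding tf_sum using Q(2) ideal that by simp
  moreover have "tf e > 0"
  proof -
    obtain y where "y \<notin> I"
      using I(2) by blast
    then have "Q y \<noteq> 0"
      using Q(3)[of y] by auto
    moreover have "Q (Q x) = Q x" for x
      using Q(2)[OF Q(3)[of x]] linear_diff[OF Q(1)] by simp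
    ultimately have "trace (matrix Q) > 0"
      using trace_matrix_orthogonal_projection_pos Q(1,4) by blast
    moreover have "Q \<circ> mul e = Q"
      using is_algebraD(5)[OF alg] by (simp add: fun_eq_iff)
    ultimately show ?thesis
      by (simp add: tf_def)
  qed
  ultimately show ?thesis
    using that by force
qed

definition bilinear_form_matrix :: "(real^'n \<Rightarrow> real^'n \<Rightarrow> real) \<Rightarrow> real^'n^'n" where
  "bilinear_form_matrix B = (\<chi> i j. B (axis i 1) (axis j 1))"

lemma bilinear_form_matrix_inner:
  fixes B :: "real^'n \<Rightarrow> real^'n \<Rightarrow> real"
  assumes "bilinear B"
  shows "(a v* bilinear_form_matrix B) \<bullet> b = B a b"
proof -
  let ?M = "bilinear_form_matrix B"
  have "(\<lambda>a b. a \<bullet> (?M *v b)) = B"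
  proof (rule bilinear_eq_stdbasis[OF _ assms])
    show "bilinear (\<lambda>a b. a \<bullet> (?M *v b))"
      using bounded_bilinear.comp[OF bounded_bilinear_inner bounded_linear_ident
          matrix_vector_mul_bounded_linear]
      by (simp add: bilinear_conv_bounded_bilinear)
    fix i j :: "real^'n"
    assume "i \<in> Basis" "j \<in> Basis"
    then obtain k l where "i = axis k 1" "j = axis l 1"
      by (auto simp: Basis_vec_def)
    then show "i \<bullet> (?M *v j) = B i j"
      by (simp add: bilinear_form_matrix_def matrix_vector_mult_basis column_def inner_axis')
  qed
  then show ?thesis
    by (metis dot_lmul_matrix)
qed

lemma linear_compose_bilinear:
  assumes "linear f" "bilinear h"
  shows "bilinear (\<lambda>x y. f (h x y))"
  using assms unfolding bilinear_def by (auto intro: linear_compose[unfolded o_def])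

lemma bounded_linear_vector_matrix_mult: "bounded_linear (\<lambda>x. x v* (A::real^'m^'n))"
  unfolding transpose_matrix_vector[symmetric] by (rule matrix_vector_mul_bounded_linear)

lemma vector_matrix_mult_eq_0_iff:
  assumes "invertible (L::real^'n^'n)"
  shows "x v* L = 0 \<longleftrightarrow> x = 0"
proof -
  obtain L' where "L ** L' = mat 1"
    using assms unfolding invertible_def by blast
  then have "x = (x v* L) v* L'"
    by (simp add: vector_matrix_mul_assoc)
  then show ?thesis
    by auto
qed

lemma closed_form_at_invertible_differentiable:
  assumes "closed_form_at (\<lambda>x. f x v* L) s" and "invertible L"
  shows "f differentiable (at s)"
proof -
  obtain D where D: "((\<lambda>x. f x v* L) has_derivative D) (at s)"
    using assms(1) unfolding closed_form_at_def by blast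
  obtain L' where "L ** L' = mat 1"
    using assms(2) unfolding invertible_def by blast
  then have "f = (\<lambda>x. (f x v* L) v* L')"
    by (simp add: vector_matrix_mul_assoc)
  then show ?thesis
    using bounded_linear.has_derivative[OF bounded_linear_vector_matrix_mult D]
    unfolding differentiable_def by metis
qed

lemma alg_inv_derivative:
  fixes mul :: "real^'n \<Rightarrow> real^'n \<Rightarrow> real^'n"
  assumes alg: "is_algebra mul e" and "open S" and units: "\<And>x. x \<in> S \<Longrightarrow> alg_unit mul e x"
    and "s \<in> S" and Di: "(alg_inv mul e has_derivative Di) (at s)"
  shows "Di h = - mul (alg_inv mul e s) (mul h (alg_inv mul e s))"
proof -
  let ?si = "alg_inv mul e s"
  have "bounded_bilinear mul"
    using is_algebraD(1)[OF alg] bilinear_conv_bounded_bilinear by blast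
  from bounded_bilinear.FDERIV[OF this has_derivative_ident Di]
  have "((\<lambda>x. mul x (alg_inv mul e x)) has_derivative (\<lambda>h. mul s (Di h) + mul h ?si)) (at s)"
    by simp
  then have "((\<lambda>x. e) has_derivative (\<lambda>h. mul s (Di h) + mul h ?si)) (at s)"
    by (rule has_derivative_transform_within_open[OF _ \<open>open S\<close> \<open>s \<in> S\<close>])
      (simp add: mul_alg_inv(1)[OF alg units])
  then have "(\<lambda>h. mul s (Di h) + mul h ?si) = (\<lambda>h. 0)"
    using has_derivative_unique has_derivative_const by blast
  then have s_Di: "mul s (Di h) = - mul h ?si"
    by (metis eq_neg_iff_add_eq_0)
  have "Di h = mul ?si (mul s (Di h))"
    using mul_alg_inv(2)[OF alg units[OF \<open>s \<in> S\<close>]]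
    by (simp add: is_algebraD(4)[OF alg, symmetric] is_algebraD(5)[OF alg])
  also have "\<dots> = - mul ?si (mul h ?si)"
    using s_Di linear_neg[OF is_algebraD(2)[OF alg]] by simp
  finally show ?thesis .
qed

lemma closed_form_at_trace_form:
  fixes mul :: "real^'n \<Rightarrow> real^'n \<Rightarrow> real^'n" and tf :: "real^'n \<Rightarrow> real"
  assumes alg: "is_algebra mul e"
    and S: "open S" "\<And>x. x \<in> S \<Longrightarrow> alg_unit mul e x" "s \<in> S"
    and "alg_inv mul e differentiable (at s)"
    and tf: "linear tf" "\<And>a b. tf (mul a b) = tf (mul b a)"
  shows "closed_form_at (\<lambda>x. alg_inv mul e x v* bilinear_form_matrix (\<lambda>a b. tf (mul a b))) s"
proof -
  let ?M = "bilinear_form_matrix (\<lambda>a b. tf (mul a b))"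
  let ?si = "alg_inv mul e s"
  obtain Di where Di: "(alg_inv mul e has_derivative Di) (at s)"
    using assms(5) unfolding differentiable_def by blast
  have "((\<lambda>x. alg_inv mul e x v* ?M) has_derivative (\<lambda>h. Di h v* ?M)) (at s)"
    using bounded_linear.has_derivative[OF bounded_linear_vector_matrix_mult Di] .
  moreover have "(Di u v* ?M) \<bullet> v = - tf (mul (mul ?si u) (mul ?si v))" for u v
  proof -
    have "(Di u v* ?M) \<bullet> v = tf (mul (Di u) v)"
      by (rule bilinear_form_matrix_inner[OF linear_compose_bilinear[OF tf(1) is_algebraD(1)[OF alg]]])
    also have "mul (Di u) v = mul (- mul ?si (mul u ?si)) v"
      by (simp only: alg_inv_derivative[OF alg S Di])
    also have "\<dots> = - mul (mul ?si u) (mul ?si v)"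
      using linear_neg[OF is_algebraD(3)[OF alg]] by (simp add: is_algebraD(4)[OF alg])
    finally show ?thesis
      using linear_neg[OF tf(1)] by simp
  qed
  then have "(Di u v* ?M) \<bullet> v = (Di v v* ?M) \<bullet> u" for u v
    using tf(2) by simp
  ultimately show ?thesis
    unfolding closed_form_at_def by blast
qed

lemma trace_form_in_anti_rotor:
  fixes mul :: "real^'n \<Rightarrow> real^'n \<Rightarrow> real^'n" and tf :: "real^'n \<Rightarrow> real"
  assumes alg: "is_algebra mul e" and L: "L \<in> anti_rotor mul e" "invertible L"
    and tf: "linear tf" "\<And>a b. tf (mul a b) = tf (mul b a)"
  shows "bilinear_form_matrix (\<lambda>a b. tf (mul a b)) \<in> anti_rotor mul e"
proof -
  obtain r where "r > 0" and units: "\<forall>s\<in>ball e r. alg_unit mul e s"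
    and closed: "\<forall>s\<in>ball e r. closed_form_at (\<lambda>x. alg_inv mul e x v* L) s"
    using L(1) unfolding anti_rotor_def uncurling_metric_def by blast
  have "closed_form_at (\<lambda>x. alg_inv mul e x v* bilinear_form_matrix (\<lambda>a b. tf (mul a b))) s"
    if "s \<in> ball e r" for s
  proof (rule closed_form_at_trace_form[OF alg open_ball _ that _ tf])
    show "alg_inv mul e differentiable (at s)"
      using closed that by (intro closed_form_at_invertible_differentiable[OF _ L(2)]) blast
  qed (use units in blast)
  moreover have "transpose (bilinear_form_matrix (\<lambda>a b. tf (mul a b)))
      = bilinear_form_matrix (\<lambda>a b. tf (mul a b))"
    by (simp add: bilinear_form_matrix_def transpose_def vec_eq_iff tf(2))
  ultimately show ?thesis
    unfolding anti_rotor_def uncurling_metric_def using \<open>r > 0\<close> units by blast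
qed

lemma in_span_singleton_if_dim_le_one:
  fixes S :: "'a::euclidean_space set"
  assumes "dim S \<le> 1" "x \<in> S" "x \<noteq> 0" "y \<in> S"
  shows "y \<in> span {x}"
proof (rule ccontr)
  assume "y \<notin> span {x}"
  then have "y \<noteq> x" and "independent {y, x}"
    using \<open>x \<noteq> 0\<close> span_base by (auto simp: independent_insert)
  then have "2 \<le> dim S"
    using independent_card_le_dim[of "{y, x}" S] assms(2,4) by simp
  with assms(1) show False
    by simp
qed

lemma invertible_if_dim_le_one:
  fixes S :: "(real^'n^'n) set"
  assumes "dim S \<le> 1" "L \<in> S" "invertible L" "M \<in> S" "M \<noteq> 0"
  shows "invertible M"
proof -
  have "L \<noteq> 0"
    using vector_matrix_mult_eq_0_iff[OF assms(3), of "axis undefined 1"] by auto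
  then obtain k where "M = k *\<^sub>R L"
    using in_span_singleton_if_dim_le_one[OF assms(1,2) _ assms(4)] by (auto simp: span_singleton)
  with assms(3,5) show ?thesis
    using scalar_invertible by fastforce
qed

lemma degenerate_anti_rotor_element_of_ideal:
  fixes mul :: "real^'n \<Rightarrow> real^'n \<Rightarrow> real^'n"
  assumes alg: "is_algebra mul e" and L: "L \<in> anti_rotor mul e" "invertible L"
    and I: "two_sided_ideal mul I" "I \<noteq> UNIV" "x \<in> I"
  obtains M where "M \<in> anti_rotor mul e" "M \<noteq> 0" "x v* M = 0"
proof -
  obtain tf :: "real^'n \<Rightarrow> real" where tf: "linear tf" "\<And>a b. tf (mul a b) = tf (mul b a)"
    "\<And>x. x \<in> I \<Longrightarrow> tf x = 0" "tf e \<noteq> 0"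
    using ideal_trace_functional_exists[OF alg I(1,2)] by blast
  define M where "M = bilinear_form_matrix (\<lambda>a b. tf (mul a b))"
  have M_inner: "(a v* M) \<bullet> b = tf (mul a b)" for a b
    unfolding M_def
    by (rule bilinear_form_matrix_inner[OF linear_compose_bilinear[OF tf(1) is_algebraD(1)[OF alg]]])
  have "M \<in> anti_rotor mul e"
    unfolding M_def by (rule trace_form_in_anti_rotor[OF alg L tf(1,2)])
  moreover have "M \<noteq> 0"
    using M_inner[of e e] tf(4) is_algebraD(5)[OF alg] by auto
  moreover have "(x v* M) \<bullet> (x v* M) = 0"
    using M_inner tf(3) I(1,3) unfolding two_sided_ideal_def by simp
  ultimately show ?thesis
    using that by simp
qed

theorem corollary6p3:
  fixes mul :: "real^'n \<Rightarrow> real^'n \<Rightarrow> real^'n" and e :: "real^'n"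
  assumes "is_algebra mul e"
    and "dim (anti_rotor mul e) = 1"
    and "\<exists>L\<in>anti_rotor mul e. invertible L"
  shows "simple_algebra mul e"
proof -
  obtain L where L: "L \<in> anti_rotor mul e" "invertible L"
    using assms(3) by blast
  have "I = {0} \<or> I = UNIV" if I: "two_sided_ideal mul I" for I
  proof (rule ccontr)
    assume "\<not> (I = {0} \<or> I = UNIV)"
    then obtain x where "x \<in> I" "x \<noteq> 0" and "I \<noteq> UNIV"
      using I subspace_0 unfolding two_sided_ideal_def by blast
    then obtain M where M: "M \<in> anti_rotor mul e" "M \<noteq> 0" "x v* M = 0"
      using degenerate_anti_rotor_element_of_ideal[OF assms(1) L I] by blast
    then have "invertible M"
      using invertible_if_dim_le_one[of "anti_rotor mul e" L M] assms(2) L by simp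
    with M(3) \<open>x \<noteq> 0\<close> show False
      by (simp add: vector_matrix_mult_eq_0_iff)
  qed
  then show ?thesis
    using is_algebra_one_neq_zero[OF assms(1)] unfolding simple_algebra_def by blast
qed

end
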